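(* Let $\mathbb{F}_q$ be a finite field, and let $N, L$ be integers with $1 \le L \le N/2$ and $q \ge N+L$. Let $\alpha_1,\dots,\alpha_N,f_1,\dots,f_L$ be $N+L$ pairwise distinct elements of $\mathbb{F}_q$, write $\bm\alpha=(\alpha_1,\dots,\alpha_N)$, $\bm f=(f_1,\dots,f_L)$, let $u_1,\dots,u_N\in\mathbb{F}_q$ be arbitrary nonzero elements, $\bm u=(u_1,\dots,u_N)$, and define $\bm v=(v_1,\dots,v_N)$ by $$v_j=\frac{1}{u_j}\Big(\prod_{i\in[N],\,i\neq j}(\alpha_j-\alpha_i)\Big)^{-1},\qquad j\in[N].$$ Let $\mathbf{Q}^{\bm u}_N=\mathrm{QCSA}^q_{N,L}(\bm\alpha,\bm u,\bm f)$ and $\mathbf{Q}^{\bm v}_N=\mathrm{QCSA}^q_{N,L}(\bm\alpha,\bm v,\bm f)$. Then the block-diagonal matrix $\mathbf{B}=\begin{pmatrix}\mathbf{Q}^{\bm u}_N&\mathbf{0}\\ \mathbf{0}&\mathbf{Q}^{\bm v}_N\end{pmatrix}\in\mathbb{F}_q^{2N\times 2N}$ is invertible, and the matrix $$\mathbf{M}_Q=\mathbf{S}\,\mathbf{B}^{-1}\in\mathbb{F}_q^{N\times 2N}$$ is the channel matrix of a feasible $N$-sum box over $\mathbb{F}_q$; that is, there exist $\mathbf{G},\mathbf{H}\in\mathbb{F}_q^{2N\times N}$ such that $\mathbf{G}$ is strongly self-orthogonal, the square matrix $(\mathbf{G}\ \mathbf{H})\in\mathbb{F}_q^{2N\times 2N}$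 is invertible, and $\mathbf{M}_Q=(\mathbf{0}_N\ \ \mathbf{I}_N)(\mathbf{G}\ \mathbf{H})^{-1}$. Here $\mathbf{S}\in\mathbb{F}_q^{N\times 2N}$ is the $0/1$ selection matrix $$\mathbf{S}=\left[\begin{array}{ccc|ccc} \mathbf{I}_L&\mathbf{0}_{L\times \lceil N/2\rceil}&\mathbf{0}&\mathbf{0}&\mathbf{0}&\mathbf{0}\\ \mathbf{0}&\mathbf{0}&\mathbf{I}_{\lfloor N/2\rfloor -L}&\mathbf{0}&\mathbf{0}&\mathbf{0}\\ \mathbf{0}&\mathbf{0}&\mathbf{0}&\mathbf{I}_L&\mathbf{0}_{L\times \lfloor N/2\rfloor }&\mathbf{0}\\ \mathbf{0}&\mathbf{0}&\mathbf{0}&\mathbf{0}&\mathbf{0}&\mathbf{I}_{\lceil N/2\rceil -L} \end{array}\right],$$ i.e., for $\mathbf{z}\in\mathbb{F}_q^{2N}$, $\mathbf{S}\mathbf{z}=(z_1,\dots,z_L,\ z_{L+\lceil N/2\rceil+1},\dots,z_N,\ z_{N+1},\dots,z_{N+L},\ z_{N+L+\lfloor N/2\rfloor+1},\dots,z_{2N})^\top$.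
   Context: For $\bm\alpha\in\mathbb{F}_q^{1\times n}$ with pairwise distinct entries and $\bm w=(w_1,\dots,w_n)\in\mathbb{F}_q^{1\times n}$ with nonzero entries, $\mathrm{GRS}^q_{n,k}(\bm\alpha,\bm w)$ denotes the $n\times k$ matrix whose $(i,m)$ entry is $w_i\alpha_i^{m-1}$ ($i\in[n]$, $m\in[k]$). For $\bm\beta=(\beta_1,\dots,\beta_N)$ with all $\beta_i\neq 0$, $\alpha_1,\dots,\alpha_N,f_1,\dots,f_L$ pairwise distinct, and $L\le N/2$, the matrix $\mathrm{QCSA}^q_{N,L}(\bm\alpha,\bm\beta,\bm f)\in\mathbb{F}_q^{N\times N}$ has $(i,j)$ entry $\frac{\beta_i}{f_j-\alpha_i}$ for $j\in[L]$ and $(i,L+k)$ entry $\beta_i\alpha_i^{k-1}$ for $k\in[N-L]$ (so its columns $L+1,\dots,L+\lceil N/2\rceil$ form $\mathrm{GRS}^q_{N,\lceil N/2\rceil}(\bm\alpha,\bm\beta)$). A matrix $\mathbf{G}\in\mathbb{F}_q^{2N\times N}$ is strongly self-orthogonal (SSO) iff $\mathrm{rk}(\mathbf{G})=N$ and $\mathbf{G}^\top\mathbf{J}\mathbf{G}=\mathbf{0}$, where $\mathbf{J}=\begin{pmatrix}\mathbf{0}&-\mathbf{I}_N\\ \mathbf{I}_N&\mathbf{0}\end{pmatrix}$. $\lfloor\cdot\rfloor,\lceil\cdot\rceil$ denote floor and ceiling; blocks of size zero are empty. *)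

theory Defs
  imports "Jordan_Normal_Form.Matrix" "Jordan_Normal_Form.DL_Rank"
begin

text \<open>All indices are 0-based: row/column i here corresponds to i+1 in the paper.\<close>

definition QCSA :: "nat \<Rightarrow> nat \<Rightarrow> (nat \<Rightarrow> 'a::field) \<Rightarrow> (nat \<Rightarrow> 'a) \<Rightarrow> (nat \<Rightarrow> 'a) \<Rightarrow> 'a mat" where
  "QCSA N L \<alpha> \<beta> f = mat N N (\<lambda>(i, j).
     if j < L then \<beta> i / (f j - \<alpha> i) else \<beta> i * \<alpha> i ^ (j - L))"

text \<open>Inverse of a square matrix (meaningful when it is invertible).\<close>
definition mat_inv :: "'a::field mat \<Rightarrow> 'a mat" where
  "mat_inv A = (SOME B. B \<in> carrier_mat (dim_row A) (dim_row A) \<and>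
      A * B = 1\<^sub>m (dim_row A) \<and> B * A = 1\<^sub>m (dim_row A))"

definition hcat :: "'a::zero mat \<Rightarrow> 'a mat \<Rightarrow> 'a mat" where
  "hcat A B = mat (dim_row A) (dim_col A + dim_col B)
     (\<lambda>(i, j). if j < dim_col A then A $$ (i, j) else B $$ (i, j - dim_col A))"

definition Jmat :: "nat \<Rightarrow> 'a::field mat" where
  "Jmat N = four_block_mat (0\<^sub>m N N) (- 1\<^sub>m N) (1\<^sub>m N) (0\<^sub>m N N)"

definition SSO :: "nat \<Rightarrow> 'a::field mat \<Rightarrow> bool" where
  "SSO N G \<longleftrightarrow> G \<in> carrier_mat (2 * N) N \<and> vec_space.rank (2 * N) G = N
      \<and> transpose_mat G * Jmat N * G = 0\<^sub>m N N"

definition sel_col :: "nat \<Rightarrow> nat \<Rightarrow> nat \<Rightarrow> nat" where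
  "sel_col N L r =
     (if r < L then r
      else if r < N div 2 then r + (N + 1) div 2
      else if r < N div 2 + L then N + (r - N div 2)
      else N + r)"

definition Smat :: "nat \<Rightarrow> nat \<Rightarrow> 'a::zero_neq_one mat" where
  "Smat N L = mat N (2 * N) (\<lambda>(r, c). if c = sel_col N L r then 1 else 0)"

end

theory Submission
  imports Defs
begin

text \<open>
  Permuting the columns of \<open>B\<close> so that the GRS columns of both QCSA blocks come first gives
  \<open>B P = (G H)\<close> with \<open>G = diag(GRS(\<alpha>, u), GRS(\<alpha>, v))\<close>, while \<open>(0 I) P\<^sup>T = S\<close>; hence
  \<open>S B\<^sup>-\<^sup>1 = (0 I) (G H)\<^sup>-\<^sup>1\<close>. The weights \<open>v\<close> make the two GRS codes orthogonal, because
  \<open>\<Sum>i. \<alpha> i ^ m / (\<Prod>k\<noteq>i. \<alpha> i - \<alpha> k) = 0\<close> for \<open>m \<le> N - 2\<close>; this is exactly \<open>G\<^sup>T J G = 0\<close>, and \<open>G\<close> has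
  full rank as a block of the invertible \<open>(G H)\<close>. Finally \<open>B\<close> is invertible because a QCSA
  matrix is: a kernel vector yields, after clearing denominators, a polynomial of degree
  less than \<open>N\<close> vanishing at all \<open>\<alpha> i\<close>, and uniqueness of partial fractions makes it zero.
\<close>

lemma sum_lessThan_add:
  fixes m n :: nat
  shows "(\<Sum>i<m + n. g i) = (\<Sum>i<m. g i) + (\<Sum>i<n. g (m + i))"
  by (induction n) (simp_all add: add.assoc)

section \<open>Invertibility, rank and block matrices\<close>

lemma mat_inv_eqI:
  fixes A :: "'a::field mat"
  assumes A: "A \<in> carrier_mat n n" and B: "B \<in> carrier_mat n n" and AB: "A * B = 1\<^sub>m n"
  shows "invertible_mat A" and "mat_inv A = B"
proof -
  have BA: "B * A = 1\<^sub>m n"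
    by (rule mat_mult_left_right_inverse[OF A B AB])
  show "invertible_mat A"
    unfolding invertible_mat_def inverts_mat_def using A B AB BA by auto
  have unique: "B' = B" if "B' \<in> carrier_mat n n" "A * B' = 1\<^sub>m n" for B'
  proof -
    have "B' = (B * A) * B'" using BA that by simp
    also have "\<dots> = B" using A B that by (simp add: assoc_mult_mat[of B n n A n B' n])
    finally show ?thesis .
  qed
  show "mat_inv A = B"
    unfolding mat_inv_def using A B AB BA by (intro some_equality) (auto intro: unique)
qed

lemma invertible_mat_mat_inv:
  fixes A :: "'a::field mat"
  assumes inv: "invertible_mat A" and A: "A \<in> carrier_mat n n"
  shows "mat_inv A \<in> carrier_mat n n" and "A * mat_inv A = 1\<^sub>m n"
proof -
  obtain B where AB: "A * B = 1\<^sub>m n" and BA: "B * A = 1\<^sub>m (dim_row B)"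
    using inv A unfolding invertible_mat_def inverts_mat_def by auto
  have B: "B \<in> carrier_mat n n"
    using arg_cong[OF AB, of dim_col] arg_cong[OF BA, of dim_col] A by auto
  then show "mat_inv A \<in> carrier_mat n n" and "A * mat_inv A = 1\<^sub>m n"
    using mat_inv_eqI(2)[OF A B AB] AB by simp_all
qed

lemma invertible_mat_mult_vec_eq_0_imp:
  fixes A :: "'a::field mat"
  assumes inv: "invertible_mat A" and A: "A \<in> carrier_mat n n"
    and v: "v \<in> carrier_vec n" and Av: "A *\<^sub>v v = 0\<^sub>v n"
  shows "v = 0\<^sub>v n"
proof -
  note A' = invertible_mat_mat_inv[OF inv A]
  have "v = mat_inv A *\<^sub>v (A *\<^sub>v v)"
    using A A' v mat_mult_left_right_inverse[OF A A'] by (simp flip: assoc_mult_mat_vec)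
  then show ?thesis
    using Av A'(1) by auto
qed

lemma distinct_cols_if_inj:
  fixes A :: "'a::field mat"
  assumes A: "A \<in> carrier_mat m n"
    and inj: "\<And>v. v \<in> carrier_vec n \<Longrightarrow> A *\<^sub>v v = 0\<^sub>v m \<Longrightarrow> v = 0\<^sub>v n"
  shows "distinct (cols A)"
proof (rule ccontr)
  assume "\<not> distinct (cols A)"
  then obtain i j where ij: "i \<noteq> j" "i < n" "j < n" "col A i = col A j"
    using A unfolding distinct_conv_nth by auto
  define v where "v = vec n (\<lambda>k. if k = i then 1 else if k = j then -1 else (0::'a))"
  have "A *\<^sub>v v = 0\<^sub>v m"
  proof (rule eq_vecI)
    fix r assume "r < dim_vec (0\<^sub>v m :: 'a vec)"
    then have r: "r < m" by simp
    have "(A *\<^sub>v v) $ r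
        = (\<Sum>k<n. (if k = i then A $$ (r, k) else 0) - (if k = j then A $$ (r, k) else 0))"
      using A r ij unfolding v_def
      by (simp add: scalar_prod_def lessThan_atLeast0) (intro sum.cong, auto)
    also have "\<dots> = A $$ (r, i) - A $$ (r, j)"
      using ij by (simp add: sum_subtractf sum.delta')
    also have "\<dots> = 0"
    proof -
      have "A $$ (r, i) = col A i $ r" "A $$ (r, j) = col A j $ r"
        using A r ij(2,3) by auto
      then show ?thesis
        using ij(4) by simp
    qed
    finally show "(A *\<^sub>v v) $ r = 0\<^sub>v m $ r"
      using r by simp
  qed (use A in auto)
  then have "v = 0\<^sub>v n"
    using inj by (simp add: v_def)
  then have "v $ i = 0"
    using ij by simp
  then show False
    using ij by (simp add: v_def)
qed

lemma rank_eq_dim_col_if_inj: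
  fixes A :: "'a::field mat"
  assumes A: "A \<in> carrier_mat m n"
    and inj: "\<And>v. v \<in> carrier_vec n \<Longrightarrow> A *\<^sub>v v = 0\<^sub>v m \<Longrightarrow> v = 0\<^sub>v n"
  shows "vec_space.rank m A = n"
proof -
  have distinct: "distinct (cols A)"
    by (rule distinct_cols_if_inj[OF A inj])
  have "\<not> module.lin_dep class_ring (module_vec TYPE('a) m) (set (cols A))"
    using vec_space.lin_depE[OF A _ distinct] inj by metis
  then show ?thesis
    using vec_space.lin_indpt_full_rank[OF A distinct] by blast
qed

lemma rank_left_block_of_invertible:
  fixes G H :: "'a::field mat"
  assumes G: "G \<in> carrier_mat n k" and H: "H \<in> carrier_mat n m"
    and inv: "invertible_mat (hcat G H)"
  shows "vec_space.rank n G = k"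
proof (rule rank_eq_dim_col_if_inj[OF G])
  have GH: "hcat G H \<in> carrier_mat n n"
    using inv G H unfolding invertible_mat_def by (auto simp: hcat_def)
  then have n: "n = k + m"
    using G H by (auto simp: hcat_def)
  fix w :: "'a vec" assume w: "w \<in> carrier_vec k" and Gw: "G *\<^sub>v w = 0\<^sub>v n"
  define w' where "w' = vec n (\<lambda>j. if j < k then w $ j else 0)"
  have "hcat G H *\<^sub>v w' = G *\<^sub>v w"
  proof (rule eq_vecI)
    fix i assume "i < dim_vec (G *\<^sub>v w)"
    then have i: "i < n" using G by simp
    have "(hcat G H *\<^sub>v w') $ i = (\<Sum>j<k + m. hcat G H $$ (i, j) * w' $ j)"
      using i GH n by (simp add: scalar_prod_def lessThan_atLeast0 w'_def)
    also have "\<dots> = (\<Sum>j<k. G $$ (i, j) * w $ j)"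
      unfolding sum_lessThan_add using i G H n by (simp add: hcat_def w'_def)
    also have "\<dots> = (G *\<^sub>v w) $ i"
      using i G w by (simp add: scalar_prod_def lessThan_atLeast0)
    finally show "(hcat G H *\<^sub>v w') $ i = (G *\<^sub>v w) $ i" .
  qed (use G H in \<open>auto simp: hcat_def\<close>)
  then have "w' = 0\<^sub>v n"
    using invertible_mat_mult_vec_eq_0_imp[OF inv GH] Gw by (simp add: w'_def)
  show "w = 0\<^sub>v k"
  proof (rule eq_vecI)
    fix j assume "j < dim_vec (0\<^sub>v k :: 'a vec)"
    then have "j < k" by simp
    then have "w $ j = w' $ j" using n by (simp add: w'_def)
    then show "w $ j = 0\<^sub>v k $ j"
      using \<open>w' = 0\<^sub>v n\<close> \<open>j < k\<close> n by simp
  qed (use w in simp)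
qed

lemma four_block_diag_mult:
  fixes A D :: "'a::semiring_0 mat"
  assumes A: "A \<in> carrier_mat n1 k1" and D: "D \<in> carrier_mat n2 k2"
    and A': "A' \<in> carrier_mat k1 m1" and D': "D' \<in> carrier_mat k2 m2"
  shows "four_block_mat A (0\<^sub>m n1 k2) (0\<^sub>m n2 k1) D * four_block_mat A' (0\<^sub>m k1 m2) (0\<^sub>m k2 m1) D'
         = four_block_mat (A * A') (0\<^sub>m n1 m2) (0\<^sub>m n2 m1) (D * D')"
  using A D A' D'
  by (subst mult_four_block_mat[OF A zero_carrier_mat zero_carrier_mat D A' zero_carrier_mat zero_carrier_mat D'])
     auto

lemma invertible_four_block_diag:
  fixes A D :: "'a::field mat"
  assumes A: "A \<in> carrier_mat n n" and D: "D \<in> carrier_mat m m"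
    and "invertible_mat A" and "invertible_mat D"
  shows "invertible_mat (four_block_mat A (0\<^sub>m n m) (0\<^sub>m m n) D)"
proof -
  note A' = invertible_mat_mat_inv[OF \<open>invertible_mat A\<close> A]
    and D' = invertible_mat_mat_inv[OF \<open>invertible_mat D\<close> D]
  have "four_block_mat A (0\<^sub>m n m) (0\<^sub>m m n) D
        * four_block_mat (mat_inv A) (0\<^sub>m n m) (0\<^sub>m m n) (mat_inv D) = 1\<^sub>m (n + m)"
    using A' D' by (simp add: four_block_diag_mult[OF A D A'(1) D'(1)])
  then show ?thesis
    using A D A'(1) D'(1) by (intro mat_inv_eqI(1)) auto
qed

lemma symplectic_form_four_block_diag:
  fixes U V :: "'a::field mat"
  assumes U: "U \<in> carrier_mat n a" and V: "V \<in> carrier_mat n b"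
  shows "transpose_mat (four_block_mat U (0\<^sub>m n b) (0\<^sub>m n a) V) * Jmat n
           * four_block_mat U (0\<^sub>m n b) (0\<^sub>m n a) V
         = four_block_mat (0\<^sub>m a a) (- (transpose_mat U * V)) (transpose_mat V * U) (0\<^sub>m b b)"
proof -
  have UT: "transpose_mat U \<in> carrier_mat a n" and VT: "transpose_mat V \<in> carrier_mat b n"
    using U V by auto
  have "transpose_mat (four_block_mat U (0\<^sub>m n b) (0\<^sub>m n a) V) * Jmat n
      = four_block_mat (0\<^sub>m a n) (- transpose_mat U) (transpose_mat V) (0\<^sub>m b n)"
    unfolding Jmat_def transpose_four_block_mat[OF U zero_carrier_mat zero_carrier_mat V]
      zero_transpose_mat
    by (subst mult_four_block_mat[OF UT zero_carrier_mat zero_carrier_mat VT])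
       (use UT VT in \<open>auto intro: cong_four_block_mat\<close>)
  also have "\<dots> * four_block_mat U (0\<^sub>m n b) (0\<^sub>m n a) V
      = four_block_mat (0\<^sub>m a a) (- (transpose_mat U * V)) (transpose_mat V * U) (0\<^sub>m b b)"
    by (subst mult_four_block_mat[OF zero_carrier_mat _ _ zero_carrier_mat U zero_carrier_mat
          zero_carrier_mat V])
       (use UT VT U V in \<open>auto intro!: cong_four_block_mat\<close>)
  finally show ?thesis .
qed

lemma hcat_zero_one_mult:
  fixes A :: "'a::semiring_1 mat"
  assumes A: "A \<in> carrier_mat (k + m) n"
  shows "hcat (0\<^sub>m m k) (1\<^sub>m m) * A = mat m n (\<lambda>(r, c). A $$ (k + r, c))"
proof (rule eq_matI)
  fix r c assume "r < dim_row (mat m n (\<lambda>(r, c). A $$ (k + r, c)))"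
    "c < dim_col (mat m n (\<lambda>(r, c). A $$ (k + r, c)))"
  then have r: "r < m" and c: "c < n" by auto
  have "(hcat (0\<^sub>m m k) (1\<^sub>m m) * A) $$ (r, c)
      = (\<Sum>j<k + m. hcat (0\<^sub>m m k) (1\<^sub>m m) $$ (r, j) * A $$ (j, c))"
    using A r c by (simp add: hcat_def scalar_prod_def lessThan_atLeast0)
  also have "\<dots> = A $$ (k + r, c)"
    unfolding sum_lessThan_add using r
    by (simp add: hcat_def if_distrib[of "\<lambda>x. x * _"] cong: if_cong)
  finally show "(hcat (0\<^sub>m m k) (1\<^sub>m m) * A) $$ (r, c) = mat m n (\<lambda>(r, c). A $$ (k + r, c)) $$ (r, c)"
    using r c by simp
qed (use A in \<open>auto simp: hcat_def\<close>)

section \<open>Permutation matrices\<close>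

definition perm_mat :: "nat \<Rightarrow> (nat \<Rightarrow> nat) \<Rightarrow> 'a::zero_neq_one mat" where
  "perm_mat n \<sigma> = mat n n (\<lambda>(i, j). if i = \<sigma> j then 1 else 0)"

lemma perm_mat_carrier [simp]: "perm_mat n \<sigma> \<in> carrier_mat n n"
  by (simp add: perm_mat_def)

lemma index_mult_perm_mat:
  fixes A :: "'a::semiring_1 mat"
  assumes A: "A \<in> carrier_mat m n" and i: "i < m" and j: "j < n" and \<sigma>: "\<sigma> j < n"
  shows "(A * perm_mat n \<sigma>) $$ (i, j) = A $$ (i, \<sigma> j)"
proof -
  have "(A * perm_mat n \<sigma>) $$ (i, j) = (\<Sum>k<n. if k = \<sigma> j then A $$ (i, k) else 0)"
    using A i j by (simp add: perm_mat_def scalar_prod_def lessThan_atLeast0 if_distrib cong: if_cong)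
  also have "\<dots> = A $$ (i, \<sigma> j)"
    using \<sigma> by (simp add: sum.delta')
  finally show ?thesis .
qed

lemma perm_mat_mult_transpose:
  assumes bij: "bij_betw \<sigma> {..<n} {..<n}"
  shows "perm_mat n \<sigma> * transpose_mat (perm_mat n \<sigma>) = (1\<^sub>m n :: 'a::semiring_1 mat)"
proof (rule eq_matI)
  fix i k assume "i < dim_row (1\<^sub>m n :: 'a mat)" "k < dim_col (1\<^sub>m n :: 'a mat)"
  then have i: "i < n" and k: "k < n" by auto
  define g where "g x = (if i = x then 1 else 0) * (if k = x then 1 else (0::'a))" for x
  have "(perm_mat n \<sigma> * transpose_mat (perm_mat n \<sigma>)) $$ (i, k) = (\<Sum>j<n. g (\<sigma> j))"
    using i k by (simp add: perm_mat_def scalar_prod_def lessThan_atLeast0 g_def)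
  also have "\<dots> = (\<Sum>x<n. g x)"
    by (rule sum.reindex_bij_betw[OF bij])
  also have "\<dots> = (1\<^sub>m n :: 'a mat) $$ (i, k)"
    using i k by (simp add: g_def sum.delta if_distrib cong: if_cong)
  finally show "(perm_mat n \<sigma> * transpose_mat (perm_mat n \<sigma>)) $$ (i, k) = (1\<^sub>m n :: 'a mat) $$ (i, k)" .
qed (auto simp: perm_mat_def)

lemma mat_inv_mult_perm_mat:
  fixes B :: "'a::field mat"
  assumes B: "B \<in> carrier_mat n n" and inv: "invertible_mat B"
    and bij: "bij_betw \<sigma> {..<n} {..<n}"
  shows "invertible_mat (B * perm_mat n \<sigma>)"
    and "mat_inv (B * perm_mat n \<sigma>) = transpose_mat (perm_mat n \<sigma>) * mat_inv B"
proof -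
  let ?P = "perm_mat n \<sigma> :: 'a mat"
  note B' = invertible_mat_mat_inv[OF inv B]
  have P: "?P \<in> carrier_mat n n" and PT: "transpose_mat ?P \<in> carrier_mat n n"
    by simp_all
  have "B * ?P * (transpose_mat ?P * mat_inv B) = B * ((?P * transpose_mat ?P) * mat_inv B)"
    using assoc_mult_mat[OF B P mult_carrier_mat[OF PT B'(1)]]
      assoc_mult_mat[OF P PT B'(1)] by simp
  also have "\<dots> = 1\<^sub>m n"
    using B'(1,2) by (simp add: perm_mat_mult_transpose[OF bij])
  finally show "invertible_mat (B * ?P)" and "mat_inv (B * ?P) = transpose_mat ?P * mat_inv B"
    using mat_inv_eqI[OF mult_carrier_mat[OF B P] mult_carrier_mat[OF PT B'(1)]] by simp_all
qed

lemma mult_perm_mat_eq_hcat: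
  fixes A :: "'a::semiring_1 mat"
  assumes A: "A \<in> carrier_mat m n" and bij: "bij_betw \<sigma> {..<n} {..<n}" and k: "k \<le> n"
  shows "A * perm_mat n \<sigma>
         = hcat (mat m k (\<lambda>(i, j). A $$ (i, \<sigma> j))) (mat m (n - k) (\<lambda>(i, j). A $$ (i, \<sigma> (k + j))))"
proof -
  let ?G = "mat m k (\<lambda>(i, j). A $$ (i, \<sigma> j))"
    and ?H = "mat m (n - k) (\<lambda>(i, j). A $$ (i, \<sigma> (k + j)))"
  show ?thesis
  proof (rule eq_matI)
    fix i j assume "i < dim_row (hcat ?G ?H)" and "j < dim_col (hcat ?G ?H)"
    then have i: "i < m" and j: "j < n"
      using k by (simp_all add: hcat_def)
    then show "(A * perm_mat n \<sigma>) $$ (i, j) = hcat ?G ?H $$ (i, j)"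
      using index_mult_perm_mat[OF A i j, of \<sigma>] bij_betwE[OF bij] j k by (simp add: hcat_def)
  qed (use A k in \<open>simp_all add: hcat_def perm_mat_def\<close>)
qed

section \<open>Dual generalized Reed--Solomon codes\<close>

lemma sum_power_div_prod_diff_eq_0:
  fixes \<alpha> :: "nat \<Rightarrow> 'a::field"
  assumes inj: "inj_on \<alpha> {..<N}" and m: "m + 2 \<le> N"
  shows "(\<Sum>i<N. \<alpha> i ^ m * inverse (\<Prod>k\<in>{..<N}-{i}. \<alpha> i - \<alpha> k)) = 0"
proof -
  \<comment> \<open>The sum is the coefficient of \<open>x^(N-1)\<close> of the Lagrange interpolant of \<open>x^m\<close> at the
    nodes \<open>\<alpha> i\<close>; that interpolant is \<open>x^m\<close> itself.\<close>
  define p where "p i = (\<Prod>k\<in>{..<N}-{i}. [:- \<alpha> k, 1:])" for i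
  define w where "w i = inverse (\<Prod>k\<in>{..<N}-{i}. \<alpha> i - \<alpha> k)" for i
  define Q where "Q = (\<Sum>i<N. Polynomial.smult (\<alpha> i ^ m * w i) (p i))"
  have poly_p: "poly (p i) x = (\<Prod>k\<in>{..<N}-{i}. x - \<alpha> k)" for i x
    by (simp add: p_def poly_prod)
  have degree_p: "degree (p i) = N - 1" and lead_coeff_p: "lead_coeff (p i) = 1" if "i < N" for i
    using that unfolding p_def lead_coeff_prod by (subst degree_prod_eq_sum_degree) auto
  have poly_Q: "poly Q (\<alpha> j) = \<alpha> j ^ m" if j: "j < N" for j
  proof -
    have "poly (p i) (\<alpha> j) = 0" if "i < N" "i \<noteq> j" for i
      unfolding poly_p using that j by (intro prod_zero) (auto intro!: bexI[of _ j])
    then have "poly Q (\<alpha> j) = \<alpha> j ^ m * w j * poly (p j) (\<alpha> j)"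
      unfolding Q_def poly_sum poly_smult using j by (subst sum.remove[of _ j]) auto
    moreover have "w j * poly (p j) (\<alpha> j) = 1"
      unfolding w_def poly_p using inj j by (intro left_inverse) (auto simp: inj_on_def)
    ultimately show ?thesis by (simp add: mult.assoc)
  qed
  have "degree Q < N" unfolding Q_def
    using m by (intro le_less_trans[OF degree_sum_le[of _ _ "N - 1"]])
      (auto intro: le_trans[OF degree_smult_le] simp: degree_p)
  then have "Q = monom 1 m"
    using m card_image[OF inj] poly_Q
    by (intro poly_eqI_degree[of "\<alpha> ` {..<N}"]) (auto simp: poly_monom degree_monom_eq)
  then have "coeff Q (N - 1) = 0" using m by simp
  moreover have "coeff (p i) (N - 1) = 1" if "i < N" for i
    using degree_p[OF that] lead_coeff_p[OF that] by simp
  then have "coeff Q (N - 1) = (\<Sum>i<N. \<alpha> i ^ m * w i)"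
    unfolding Q_def coeff_sum by (intro sum.cong) auto
  ultimately show ?thesis by (simp add: w_def)
qed

definition GRS :: "nat \<Rightarrow> nat \<Rightarrow> (nat \<Rightarrow> 'a::field) \<Rightarrow> (nat \<Rightarrow> 'a) \<Rightarrow> 'a mat" where
  "GRS n k \<alpha> w = mat n k (\<lambda>(i, m). w i * \<alpha> i ^ m)"

lemma transpose_GRS_mult_dual_GRS:
  fixes \<alpha> u :: "nat \<Rightarrow> 'a::field"
  assumes inj: "inj_on \<alpha> {..<N}" and u: "\<forall>j<N. u j \<noteq> 0" and ab: "a + b \<le> N"
  shows "transpose_mat (GRS N a \<alpha> u)
           * GRS N b \<alpha> (\<lambda>j. (1 / u j) * inverse (\<Prod>i\<in>{..<N} - {j}. \<alpha> j - \<alpha> i))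
         = 0\<^sub>m a b"
proof (rule eq_matI)
  fix r s assume "r < dim_row (0\<^sub>m a b :: 'a mat)" "s < dim_col (0\<^sub>m a b :: 'a mat)"
  then have r: "r < a" and s: "s < b" by auto
  have "(transpose_mat (GRS N a \<alpha> u)
           * GRS N b \<alpha> (\<lambda>j. (1 / u j) * inverse (\<Prod>i\<in>{..<N} - {j}. \<alpha> j - \<alpha> i))) $$ (r, s)
      = (\<Sum>k<N. \<alpha> k ^ (r + s) * inverse (\<Prod>i\<in>{..<N} - {k}. \<alpha> k - \<alpha> i))"
    using r s u by (auto simp: GRS_def scalar_prod_def lessThan_atLeast0 power_add intro!: sum.cong)
  also have "\<dots> = 0"
    using r s ab by (intro sum_power_div_prod_diff_eq_0[OF inj]) linarith
  finally show "(transpose_mat (GRS N a \<alpha> u)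
           * GRS N b \<alpha> (\<lambda>j. (1 / u j) * inverse (\<Prod>i\<in>{..<N} - {j}. \<alpha> j - \<alpha> i))) $$ (r, s)
      = 0\<^sub>m a b $$ (r, s)" using r s by simp
qed (auto simp: GRS_def)

lemma symplectic_form_dual_GRS_eq_0:
  fixes N a b :: nat and \<alpha> u :: "nat \<Rightarrow> 'a::field"
  defines "G \<equiv> four_block_mat (GRS N a \<alpha> u) (0\<^sub>m N b) (0\<^sub>m N a)
              (GRS N b \<alpha> (\<lambda>j. (1 / u j) * inverse (\<Prod>i\<in>{..<N} - {j}. \<alpha> j - \<alpha> i)))"
  assumes inj: "inj_on \<alpha> {..<N}" and u: "\<forall>j<N. u j \<noteq> 0" and ab: "a + b = N"
  shows "transpose_mat G * Jmat N * G = 0\<^sub>m N N"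
proof -
  let ?U = "GRS N a \<alpha> u"
  let ?V = "GRS N b \<alpha> (\<lambda>j. (1 / u j) * inverse (\<Prod>i\<in>{..<N} - {j}. \<alpha> j - \<alpha> i))"
  have U: "?U \<in> carrier_mat N a" and V: "?V \<in> carrier_mat N b"
    by (simp_all add: GRS_def)
  have UV: "transpose_mat ?U * ?V = 0\<^sub>m a b"
    using ab by (intro transpose_GRS_mult_dual_GRS[OF inj u]) simp
  moreover have "transpose_mat ?V * ?U = 0\<^sub>m b a"
    using UV transpose_mult[of "transpose_mat ?U" a N ?V b] U V by simp
  moreover have "- 0\<^sub>m a b = (0\<^sub>m a b :: 'a mat)"
    by (rule eq_matI) auto
  ultimately show ?thesis
    unfolding G_def symplectic_form_four_block_diag[OF U V] by (simp add: ab)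
qed

section \<open>Nonsingularity of QCSA matrices\<close>

lemma QCSA_carrier_mat [simp]: "QCSA N L \<alpha> \<beta> f \<in> carrier_mat N N"
  and dim_QCSA [simp]: "dim_row (QCSA N L \<alpha> \<beta> f) = N" "dim_col (QCSA N L \<alpha> \<beta> f) = N"
  by (simp_all add: QCSA_def)

lemma QCSA_mult_vec_nth:
  fixes \<alpha> \<beta> f :: "nat \<Rightarrow> 'a::field"
  assumes L: "L \<le> N" and i: "i < N" and c: "c \<in> carrier_vec N"
  shows "(QCSA N L \<alpha> \<beta> f *\<^sub>v c) $ i
           = \<beta> i * ((\<Sum>j<L. c $ j / (f j - \<alpha> i)) + (\<Sum>k<N - L. c $ (L + k) * \<alpha> i ^ k))"
proof -
  have "(QCSA N L \<alpha> \<beta> f *\<^sub>v c) $ i = (\<Sum>j<L + (N - L). QCSA N L \<alpha> \<beta> f $$ (i, j) * c $ j)"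
    using i c L by (simp add: scalar_prod_def lessThan_atLeast0)
  also have "\<dots> = (\<Sum>j<L. \<beta> i / (f j - \<alpha> i) * c $ j) + (\<Sum>k<N - L. \<beta> i * \<alpha> i ^ k * c $ (L + k))"
    unfolding sum_lessThan_add using i L by (intro arg_cong2[where f = "(+)"] sum.cong) (auto simp: QCSA_def)
  finally show ?thesis
    by (simp add: distrib_left sum_distrib_left mult_ac)
qed

lemma partial_fraction_poly_eq_0_imp:
  fixes f c :: "nat \<Rightarrow> 'a::field"
  assumes inj: "inj_on f {..<L}"
    and P: "(\<Sum>j<L. Polynomial.smult (c j) (\<Prod>l\<in>{..<L}-{j}. [:f l, -1:]))
              + (\<Prod>l<L. [:f l, -1:]) * D = 0"
  shows "(\<forall>j<L. c j = 0) \<and> D = 0"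
proof -
  have c0: "c j = 0" if j: "j < L" for j
  proof -
    have vanish: "(\<Prod>l\<in>F. f l - f j) = 0" if "j \<in> F" "finite F" for F
      using that by (intro prod_zero) auto
    have "0 = (\<Sum>j'<L. c j' * (\<Prod>l\<in>{..<L}-{j'}. f l - f j))"
      using arg_cong[OF P, of "\<lambda>p. poly p (f j)"] j vanish[of "{..<L}"]
      by (simp add: poly_sum poly_prod)
    also have "\<dots> = c j * (\<Prod>l\<in>{..<L}-{j}. f l - f j)"
      using j vanish by (subst sum.remove[of _ j]) (auto intro!: sum.neutral)
    finally show ?thesis
      using inj j by (auto simp: inj_on_def)
  qed
  moreover have "(\<Prod>l<L. [:f l, -1 :: 'a:]) \<noteq> 0"
    by (subst prod_zero_iff) auto
  ultimately show ?thesis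
    using P by simp
qed

lemma poly_partial_fraction:
  fixes f c :: "nat \<Rightarrow> 'a::field"
  assumes "\<forall>j<L. f j \<noteq> x"
  shows "poly ((\<Sum>j<L. Polynomial.smult (c j) (\<Prod>l\<in>{..<L}-{j}. [:f l, -1:]))
                + (\<Prod>l<L. [:f l, -1:]) * D) x
         = (\<Prod>l<L. f l - x) * ((\<Sum>j<L. c j / (f j - x)) + poly D x)"
  unfolding distrib_left sum_distrib_left using assms
  by (auto simp: poly_sum poly_prod prod.remove[of "{..<L}"] mult_ac intro!: sum.cong)

lemma QCSA_mult_vec_eq_0_imp:
  fixes \<alpha> \<beta> f :: "nat \<Rightarrow> 'a::field"
  assumes inj: "inj_on \<alpha> {..<N}" and injf: "inj_on f {..<L}"
    and disj: "\<forall>i<N. \<forall>j<L. \<alpha> i \<noteq> f j" and \<beta>: "\<forall>i<N. \<beta> i \<noteq> 0" and LN: "L < N"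
    and c: "c \<in> carrier_vec N" and Qc: "QCSA N L \<alpha> \<beta> f *\<^sub>v c = 0\<^sub>v N"
  shows "c = 0\<^sub>v N"
proof -
  \<comment> \<open>Clearing the denominators of row \<open>i\<close> of the system gives the value at \<open>\<alpha> i\<close> of the
    polynomial \<open>P\<close> of degree less than \<open>N\<close>, so \<open>P = 0\<close>.\<close>
  define D where "D = (\<Sum>k<N - L. monom (c $ (L + k)) k)"
  define P where "P = (\<Sum>j<L. Polynomial.smult (c $ j) (\<Prod>l\<in>{..<L}-{j}. [:f l, -1:]))
                      + (\<Prod>l<L. [:f l, -1:]) * D"
  have "degree P \<le> N - 1"
  proof -
    have "degree (\<Prod>l\<in>{..<L}-{j}. [:f l, -1:]) \<le> N - 1" for j
      using LN by (intro le_trans[OF degree_prod_sum_le]) (auto simp: card_Diff_singleton_if)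
    moreover have "degree ((\<Prod>l<L. [:f l, -1:]) * D) \<le> L + (N - L - 1)"
      unfolding D_def
      by (intro le_trans[OF degree_mult_le] add_mono le_trans[OF degree_prod_sum_le] degree_sum_le)
         (auto intro: le_trans[OF degree_monom_le])
    ultimately show ?thesis
      unfolding P_def using LN
      by (intro degree_add_le degree_sum_le) (auto intro: le_trans[OF degree_smult_le])
  qed
  moreover have "poly P (\<alpha> i) = 0" if i: "i < N" for i
  proof -
    have ne: "\<forall>j<L. f j \<noteq> \<alpha> i"
      using disj i by metis
    have "poly P (\<alpha> i) = (\<Prod>l<L. f l - \<alpha> i)
            * ((\<Sum>j<L. c $ j / (f j - \<alpha> i)) + (\<Sum>k<N - L. c $ (L + k) * \<alpha> i ^ k))"
      unfolding P_def poly_partial_fraction[OF ne] by (simp add: D_def poly_sum poly_monom mult_ac)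
    also have "\<dots> = (\<Prod>l<L. f l - \<alpha> i) / \<beta> i * (QCSA N L \<alpha> \<beta> f *\<^sub>v c) $ i"
      using \<beta> i by (simp add: QCSA_mult_vec_nth[OF less_imp_le[OF LN] i c])
    finally show ?thesis
      using Qc i by simp
  qed
  ultimately have "P = 0"
    using LN card_image[OF inj] by (intro poly_eqI_degree[of "\<alpha> ` {..<N}"]) auto
  then have "(\<forall>j<L. c $ j = 0) \<and> D = 0"
    unfolding P_def by (rule partial_fraction_poly_eq_0_imp[OF injf])
  moreover have "c $ i = coeff D (i - L)" if "L \<le> i" "i < N" for i
    unfolding D_def coeff_sum using that by simp
  ultimately show ?thesis
    using c by (intro eq_vecI) (auto, metis not_less)
qed

lemma invertible_QCSA:
  fixes \<alpha> \<beta> f :: "nat \<Rightarrow> 'a::field"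
  assumes "inj_on \<alpha> {..<N}" and "inj_on f {..<L}"
    and "\<forall>i<N. \<forall>j<L. \<alpha> i \<noteq> f j" and "\<forall>i<N. \<beta> i \<noteq> 0" and "L < N"
  shows "invertible_mat (QCSA N L \<alpha> \<beta> f)"
proof -
  have "det (QCSA N L \<alpha> \<beta> f) \<noteq> 0"
    using QCSA_mult_vec_eq_0_imp[OF assms]
    by (auto simp: det_0_iff_vec_prod_zero_field[OF QCSA_carrier_mat])
  from det_non_zero_imp_unit[OF QCSA_carrier_mat this, of "()"]
  obtain Q' where "Q' \<in> carrier_mat N N" "QCSA N L \<alpha> \<beta> f * Q' = 1\<^sub>m N"
    unfolding Units_def ring_mat_def by auto
  then show ?thesis
    by (intro mat_inv_eqI(1)[OF QCSA_carrier_mat])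
qed

section \<open>Moving the GRS columns to the front\<close>

text \<open>Column \<open>j\<close> of \<open>(G H)\<close> is column \<open>grs_first_perm N L j\<close> of \<open>B\<close>: first the GRS columns of
  the two QCSA blocks, then the columns picked by \<open>Smat\<close>, in the order of its rows.\<close>

definition grs_first_perm :: "nat \<Rightarrow> nat \<Rightarrow> nat \<Rightarrow> nat" where
  "grs_first_perm N L j =
     (if j < (N + 1) div 2 then L + j
      else if j < N then N + L + (j - (N + 1) div 2)
      else sel_col N L (j - N))"

lemma bij_grs_first_perm:
  assumes "2 * L \<le> N"
  shows "bij_betw (grs_first_perm N L) {..<2 * N} {..<2 * N}"
proof -
  obtain c d where cd: "Suc N div 2 = c" "N div 2 = d" by blast
  have N: "c + d = N" "d \<le> c" "L \<le> d"
    using assms cd by linarith+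
  define \<tau> where "\<tau> i =
     (if i < L then N + i else if i < L + c then i - L else if i < N then N + (i - c)
      else if i < N + L then N + d + (i - N) else if i < N + L + d then c + (i - N - L) else i)"
    for i
  have inv: "\<tau> (grs_first_perm N L j) = j \<and> grs_first_perm N L j < 2 * N" if "j < 2 * N" for j
  proof -
    consider "j < c" | "c \<le> j" "j < N" | "N \<le> j" "j < N + L" | "N + L \<le> j" "j < N + d"
      | "N + d \<le> j" "j < N + d + L" | "N + d + L \<le> j"
      using that by linarith
    then show ?thesis
      using N that by cases (auto simp: \<tau>_def grs_first_perm_def sel_col_def cd)
  qed
  have "inj_on (grs_first_perm N L) {..<2 * N}"
    using inv by (metis inj_on_inverseI lessThan_iff)
  moreover have "grs_first_perm N L ` {..<2 * N} \<subseteq> {..<2 * N}"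
    using inv by auto
  ultimately show ?thesis
    by (simp add: bij_betw_def endo_inj_surj)
qed

lemma QCSA_block_grs_first_columns:
  fixes \<alpha> u v f :: "nat \<Rightarrow> 'a::field"
  assumes L: "2 * L \<le> N"
  shows "mat (2 * N) N (\<lambda>(i, j). four_block_mat (QCSA N L \<alpha> u f) (0\<^sub>m N N) (0\<^sub>m N N)
             (QCSA N L \<alpha> v f) $$ (i, grs_first_perm N L j))
         = four_block_mat (GRS N ((N + 1) div 2) \<alpha> u) (0\<^sub>m N (N div 2))
             (0\<^sub>m N ((N + 1) div 2)) (GRS N (N div 2) \<alpha> v)"
proof -
  have "(N + 1) div 2 + N div 2 = N" "N div 2 \<le> (N + 1) div 2" "L \<le> N div 2"
    using L by linarith+
  then show ?thesis
    by (intro eq_matI) (auto simp: grs_first_perm_def QCSA_def GRS_def)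
qed

lemma Smat_eq_hcat_mult_transpose_perm_mat:
  assumes "2 * L \<le> N"
  shows "(Smat N L :: 'a::semiring_1 mat)
           = hcat (0\<^sub>m N N) (1\<^sub>m N) * transpose_mat (perm_mat (2 * N) (grs_first_perm N L))"
proof -
  have PT: "transpose_mat (perm_mat (2 * N) (grs_first_perm N L) :: 'a mat) \<in> carrier_mat (N + N) (2 * N)"
    by (simp add: mult_2)
  have "Suc N div 2 \<le> N"
    by simp
  then show ?thesis
    unfolding hcat_zero_one_mult[OF PT]
    by (intro eq_matI) (simp_all add: Smat_def perm_mat_def grs_first_perm_def)
qed

theorem theorem1:
  fixes N L :: nat and \<alpha> f u :: "nat \<Rightarrow> 'a::{field, finite}"
  assumes "1 \<le> L" and "2 * L \<le> N" and "N + L \<le> card (UNIV :: 'a set)"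
    and "inj_on \<alpha> {..<N}" and "inj_on f {..<L}"
    and "\<forall>i<N. \<forall>j<L. \<alpha> i \<noteq> f j"
    and "\<forall>j<N. u j \<noteq> 0"
  shows "let v = (\<lambda>j. (1 / u j) * inverse (\<Prod>i\<in>{..<N} - {j}. \<alpha> j - \<alpha> i));
             B = four_block_mat (QCSA N L \<alpha> u f) (0\<^sub>m N N) (0\<^sub>m N N) (QCSA N L \<alpha> v f);
             MQ = Smat N L * mat_inv B
         in invertible_mat B \<and>
            (\<exists>G H. G \<in> carrier_mat (2 * N) N \<and> H \<in> carrier_mat (2 * N) N \<and>
                   SSO N G \<and> invertible_mat (hcat G H) \<and>
                   MQ = hcat (0\<^sub>m N N) (1\<^sub>m N) * mat_inv (hcat G H))"
proof -
  note L = assms(2) and inj = assms(4) and u = assms(7)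
  define v where "v = (\<lambda>j. (1 / u j) * inverse (\<Prod>i\<in>{..<N} - {j}. \<alpha> j - \<alpha> i))"
  define B where "B = four_block_mat (QCSA N L \<alpha> u f) (0\<^sub>m N N) (0\<^sub>m N N) (QCSA N L \<alpha> v f)"
  define P :: "'a mat" where "P = perm_mat (2 * N) (grs_first_perm N L)"
  define G where "G = four_block_mat (GRS N ((N + 1) div 2) \<alpha> u) (0\<^sub>m N (N div 2))
                        (0\<^sub>m N ((N + 1) div 2)) (GRS N (N div 2) \<alpha> v)"
  define H where "H = mat (2 * N) N (\<lambda>(i, j). B $$ (i, grs_first_perm N L (N + j)))"
  have LN: "L < N" and v: "\<forall>j<N. v j \<noteq> 0" and N: "(N + 1) div 2 + N div 2 = N"
    using assms(1,2) u inj by (auto simp: v_def inj_on_def)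
  have "G \<in> carrier_mat (N + N) ((N + 1) div 2 + N div 2)"
    unfolding G_def by (rule four_block_carrier_mat) (simp_all add: GRS_def)
  then have B: "B \<in> carrier_mat (2 * N) (2 * N)" and G: "G \<in> carrier_mat (2 * N) N"
    and H: "H \<in> carrier_mat (2 * N) N"
    using N by (simp_all add: B_def H_def mult_2)
  have B_inv: "invertible_mat B"
    unfolding B_def mult_2 using invertible_QCSA[OF inj assms(5,6) _ LN] u v
    by (intro invertible_four_block_diag) simp_all
  note bij = bij_grs_first_perm[OF L]
  from mult_perm_mat_eq_hcat[OF B bij, where k = N]
  have GH: "hcat G H = B * P"
    by (simp add: P_def G_def H_def B_def QCSA_block_grs_first_columns[OF L])
  note GH_inv = mat_inv_mult_perm_mat[OF B B_inv bij, folded P_def GH]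
  have "transpose_mat G * Jmat N * G = 0\<^sub>m N N"
    unfolding G_def v_def using N by (rule symplectic_form_dual_GRS_eq_0[OF inj u])
  then have "SSO N G"
    unfolding SSO_def using G rank_left_block_of_invertible[OF G H GH_inv(1)] by simp
  moreover have "Smat N L * mat_inv B = hcat (0\<^sub>m N N) (1\<^sub>m N) * mat_inv (hcat G H)"
    unfolding Smat_eq_hcat_mult_transpose_perm_mat[OF L] GH_inv(2) P_def[symmetric]
    using invertible_mat_mat_inv(1)[OF B_inv B]
    by (intro assoc_mult_mat[of _ N "2 * N"]) (auto simp: hcat_def P_def)
  ultimately show ?thesis
    unfolding Let_def v_def[symmetric] B_def[symmetric]
    using B_inv G H GH_inv(1) by (intro conjI exI[of _ G] exI[of _ H])
qed

end
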